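(* Let $n\geq 3$ and $T\in\mathcal{T}_n$. Then $\chi(\mathrm{KG}(\mathcal{T}_n\setminus\{T\})) = n-2$ if and only if $T$ is not a star triangulation.
   Context: Label the vertices of a convex $n$-gon by $1,\dots,n$ in cyclic order; $\mathrm{Diag}_n = \{\{i,j\} \subseteq [n]: i-j\not\equiv \pm1 \pmod n\}$; a triangulation is identified with its set of diagonals, and $\mathcal{T}_n$ is the set of triangulations. For a set system $\mathcal{F}$, $\mathrm{KG}(\mathcal{F})$ is the graph on $\mathcal{F}$ with $F,F'$ adjacent iff $F\cap F'=\emptyset$. A star triangulation is one consisting of the $n-3$ diagonals emanating from a single vertex. *)

theory Defs
  imports Main
begin

text \<open>Vertices of the convex n-gon are 1..n in cyclic order. A diagonal is a
2-element set {i,j} of vertices that are not cyclically adjacent.\<close>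
definition diags :: "nat \<Rightarrow> nat set set" where
  "diags n = {{i, j} | i j. i \<in> {1..n} \<and> j \<in> {1..n} \<and> i \<noteq> j
      \<and> i mod n \<noteq> (j + 1) mod n \<and> j mod n \<noteq> (i + 1) mod n}"

definition crosses :: "nat set \<Rightarrow> nat set \<Rightarrow> bool" where
  "crosses d e \<longleftrightarrow> (\<exists>a b c c'. a < c \<and> c < b \<and> b < c' \<and>
      ((d = {a, b} \<and> e = {c, c'}) \<or> (e = {a, b} \<and> d = {c, c'})))"

text \<open>A triangulation (identified with its set of diagonals) is a maximal set
of pairwise non-crossing diagonals.\<close>
definition triangulations :: "nat \<Rightarrow> nat set set set" where
  "triangulations n = {T. T \<subseteq> diags n
      \<and> (\<forall>d\<in>T. \<forall>e\<in>T. \<not> crosses d e)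
      \<and> (\<forall>d\<in>diags n - T. \<exists>e\<in>T. crosses d e)}"

definition is_star :: "nat \<Rightarrow> nat set set \<Rightarrow> bool" where
  "is_star n T \<longleftrightarrow> (\<exists>v\<in>{1..n}. T = {d \<in> diags n. v \<in> d})"

definition kneser_adj :: "'a set \<Rightarrow> 'a set \<Rightarrow> bool" where
  "kneser_adj F G \<longleftrightarrow> F \<noteq> G \<and> F \<inter> G = {}"

definition chromatic_number :: "'v set \<Rightarrow> ('v \<Rightarrow> 'v \<Rightarrow> bool) \<Rightarrow> nat" where
  "chromatic_number V adj = (LEAST k. \<exists>f :: 'v \<Rightarrow> nat.
      (\<forall>x\<in>V. f x < k) \<and> (\<forall>x\<in>V. \<forall>y\<in>V. adj x y \<longrightarrow> f x \<noteq> f y))"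

end

theory Submission
  imports Defs
begin

text \<open>Upper bounds: colouring a triangulation by the smallest neighbour of vertex 1 uses \<open>n - 2\<close>
  colours, and once the star at \<open>n\<close> is removed, colouring by the leftmost ear \<open>{a, a + 2}\<close>
  avoiding \<open>n\<close> uses \<open>n - 3\<close>. Lower bound: inserting a vertex between \<open>n - 1\<close> and \<open>1\<close> extends
  a triangulation of the \<open>(n - 1)\<close>-gon in two ways, and these extensions together with the star
  at \<open>n\<close> form a Mycielski-type configuration, so a \<open>k\<close>-colouring for the \<open>n\<close>-gon yields a
  \<open>(k - 1)\<close>-colouring for the \<open>(n - 1)\<close>-gon. None of the extensions has two diagonals at
  \<open>n\<close>, so the configuration survives the removal of any such triangulation other than the star;
  up to rotation every non-star triangulation with \<open>n \<ge> 5\<close> is of this kind.\<close>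

section \<open>Diagonals and triangulations\<close>

lemma crosses_iff:
  assumes "x < (y::nat)" "z < w"
  shows "crosses {x, y} {z, w} \<longleftrightarrow> x < z \<and> z < y \<and> y < w \<or> z < x \<and> x < w \<and> w < y"
  using assms unfolding crosses_def doubleton_eq_iff by (auto; linarith?)

lemma crosses_sym: "crosses d e \<longleftrightarrow> crosses e d"
  unfolding crosses_def by blast

lemma crosses_disjoint: "crosses d e \<Longrightarrow> d \<inter> e = {}"
  unfolding crosses_def by auto

lemma diags_subset_vertices: "d \<in> diags n \<Longrightarrow> d \<subseteq> {1..n}"
  unfolding diags_def by auto

lemma cyclic_successor_iff:
  fixes n i j :: nat
  assumes "n \<ge> 3" "i \<in> {1..n}" "j \<in> {1..n}"
  shows "i mod n = (j + 1) mod n \<longleftrightarrow> i = j + 1 \<or> i = 1 \<and> j = n"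
proof (cases "j = n")
  case True
  then have "(j + 1) mod n = 1" using assms(1) by (simp add: mod_Suc)
  then show ?thesis using assms True by (cases "i = n") auto
next
  case False
  then have "(j + 1) mod n = (if j + 1 = n then 0 else j + 1)" using assms by (auto simp: mod_Suc)
  then show ?thesis using assms False by (cases "i = n") auto
qed

lemma diags_iff:
  fixes n :: nat
  assumes "n \<ge> 3"
  shows "d \<in> diags n \<longleftrightarrow> (\<exists>a b. d = {a, b} \<and> 1 \<le> a \<and> a + 2 \<le> b \<and> b \<le> n \<and> \<not> (a = 1 \<and> b = n))"
proof
  assume "d \<in> diags n"
  then obtain i j where ij: "d = {i, j}" "i \<in> {1..n}" "j \<in> {1..n}" "i \<noteq> j"
    "\<not> (i = j + 1 \<or> i = 1 \<and> j = n)" "\<not> (j = i + 1 \<or> j = 1 \<and> i = n)"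
    unfolding diags_def using cyclic_successor_iff[OF assms] by blast
  show "\<exists>a b. d = {a, b} \<and> 1 \<le> a \<and> a + 2 \<le> b \<and> b \<le> n \<and> \<not> (a = 1 \<and> b = n)"
  proof (cases "i < j")
    case True
    then have "d = {i, j} \<and> 1 \<le> i \<and> i + 2 \<le> j \<and> j \<le> n \<and> \<not> (i = 1 \<and> j = n)"
      using ij by auto
    then show ?thesis by blast
  next
    case False
    then have "d = {j, i} \<and> 1 \<le> j \<and> j + 2 \<le> i \<and> i \<le> n \<and> \<not> (j = 1 \<and> i = n)"
      using ij by (auto simp: insert_commute)
    then show ?thesis by blast
  qed
next
  assume "\<exists>a b. d = {a, b} \<and> 1 \<le> a \<and> a + 2 \<le> b \<and> b \<le> n \<and> \<not> (a = 1 \<and> b = n)"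
  then obtain a b where ab: "d = {a, b}" "1 \<le> a" "a + 2 \<le> b" "b \<le> n" "\<not> (a = 1 \<and> b = n)"
    by blast
  then have "a mod n \<noteq> (b + 1) mod n" "b mod n \<noteq> (a + 1) mod n"
    using cyclic_successor_iff[OF assms, of a b] cyclic_successor_iff[OF assms, of b a] by auto
  moreover have "a \<in> {1..n}" "b \<in> {1..n}" "a \<noteq> b" using ab by auto
  ultimately show "d \<in> diags n"
    unfolding diags_def using ab(1) by blast
qed

lemma diagsE:
  fixes n :: nat
  assumes "n \<ge> 3" "d \<in> diags n"
  obtains a b where "d = {a, b}" "1 \<le> a" "a + 2 \<le> b" "b \<le> n" "\<not> (a = 1 \<and> b = n)"
  using assms(2) unfolding diags_iff[OF assms(1)] by blast

lemma diagsI: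
  fixes n :: nat
  assumes "n \<ge> 3" "1 \<le> a" "a + 2 \<le> b" "b \<le> n" "\<not> (a = 1 \<and> b = n)"
  shows "{a, b} \<in> diags n"
  using assms diags_iff by blast

lemma diags_3: "diags 3 = {}"
proof -
  have False if d: "d \<in> diags 3" for d
  proof -
    obtain a b :: nat where "1 \<le> a" "a + 2 \<le> b" "b \<le> 3" "\<not> (a = 1 \<and> b = 3)"
      by (rule diagsE[of 3 d]) (use d in auto)
    then show False by auto
  qed
  then show ?thesis by blast
qed

lemma diags_4: "diags 4 = {{1, 3}, {2, 4}}"
proof -
  have "d \<in> {{1, 3}, {2, 4}}" if d: "d \<in> diags 4" for d
  proof -
    obtain a b :: nat where "d = {a, b}" "1 \<le> a" "a + 2 \<le> b" "b \<le> 4" "\<not> (a = 1 \<and> b = 4)"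
      by (rule diagsE[of 4 d]) (use d in auto)
    then have "a = 1 \<and> b = 3 \<or> a = 2 \<and> b = 4" by auto
    then show ?thesis using \<open>d = {a, b}\<close> by auto
  qed
  moreover have "{1, 3} \<in> diags 4" "{2, 4} \<in> diags 4" by (auto intro: diagsI)
  ultimately show ?thesis by blast
qed

lemma diags_mono:
  assumes "m \<ge> 3"
  shows "diags m \<subseteq> diags (Suc m)"
proof
  fix d assume "d \<in> diags m"
  then obtain a b where "d = {a, b}" "1 \<le> a" "a + 2 \<le> b" "b \<le> m"
    using diagsE[OF assms] by metis
  then show "d \<in> diags (Suc m)" using assms by (auto intro: diagsI)
qed

lemma triangulations_subset: "T \<in> triangulations n \<Longrightarrow> T \<subseteq> diags n"
  unfolding triangulations_def by blast

lemma triangulations_not_crosses: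
  "T \<in> triangulations n \<Longrightarrow> d \<in> T \<Longrightarrow> e \<in> T \<Longrightarrow> \<not> crosses d e"
  unfolding triangulations_def by blast

lemma triangulations_maximal:
  "T \<in> triangulations n \<Longrightarrow> d \<in> diags n \<Longrightarrow> d \<notin> T \<Longrightarrow> \<exists>e\<in>T. crosses d e"
  unfolding triangulations_def by blast

lemma triangulationsI:
  assumes "T \<subseteq> diags n" "\<And>d e. d \<in> T \<Longrightarrow> e \<in> T \<Longrightarrow> \<not> crosses d e"
    "\<And>d. d \<in> diags n \<Longrightarrow> d \<notin> T \<Longrightarrow> \<exists>e\<in>T. crosses d e"
  shows "T \<in> triangulations n"
  using assms unfolding triangulations_def by blast

lemma triangulation_vertices: "T \<in> triangulations m \<Longrightarrow> d \<in> T \<Longrightarrow> d \<subseteq> {1..m}"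
  using diags_subset_vertices triangulations_subset by blast

lemma triangulation_diagE:
  assumes "n \<ge> 3" "T \<in> triangulations n" "d \<in> T"
  obtains a b where "d = {a, b}" "1 \<le> a" "a + 2 \<le> b" "b \<le> n" "\<not> (a = 1 \<and> b = n)"
  using assms triangulations_subset diagsE by blast

lemma triangulations_3: "triangulations 3 = {{}}"
proof -
  have "{} \<in> triangulations 3" by (rule triangulationsI) (auto simp: diags_3)
  then show ?thesis using triangulations_subset[of _ 3] by (auto simp: diags_3)
qed

section \<open>Colourings\<close>

definition colourable :: "'v set \<Rightarrow> ('v \<Rightarrow> 'v \<Rightarrow> bool) \<Rightarrow> nat \<Rightarrow> bool" where
  "colourable V adj k \<longleftrightarrow> (\<exists>f :: 'v \<Rightarrow> nat.
      (\<forall>x\<in>V. f x < k) \<and> (\<forall>x\<in>V. \<forall>y\<in>V. adj x y \<longrightarrow> f x \<noteq> f y))"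

lemma colourableI:
  "(\<And>x. x \<in> V \<Longrightarrow> f x < k) \<Longrightarrow> (\<And>x y. x \<in> V \<Longrightarrow> y \<in> V \<Longrightarrow> adj x y \<Longrightarrow> f x \<noteq> f y)
    \<Longrightarrow> colourable V adj k"
  unfolding colourable_def by (intro exI[of _ f]) blast

lemma colourable_mono: "colourable V adj k \<Longrightarrow> k \<le> m \<Longrightarrow> colourable V adj m"
  unfolding colourable_def by (meson order_less_le_trans)

lemma colourable_subset: "colourable V adj k \<Longrightarrow> W \<subseteq> V \<Longrightarrow> colourable W adj k"
  unfolding colourable_def by (meson subsetD)

lemma not_colourable_0: "V \<noteq> {} \<Longrightarrow> \<not> colourable V adj 0"
  unfolding colourable_def by blast

lemma colourable_hom:
  assumes "colourable W adj k" "h ` V \<subseteq> W"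
    "\<And>x y. x \<in> V \<Longrightarrow> y \<in> V \<Longrightarrow> adj x y \<Longrightarrow> adj (h x) (h y)"
  shows "colourable V adj k"
proof -
  obtain f where f: "\<And>x. x \<in> W \<Longrightarrow> f x < k"
    "\<And>x y. x \<in> W \<Longrightarrow> y \<in> W \<Longrightarrow> adj x y \<Longrightarrow> f x \<noteq> f y"
    using assms(1) unfolding colourable_def by blast
  show ?thesis
  proof (rule colourableI[of V "f \<circ> h"])
    show "(f \<circ> h) x < k" if "x \<in> V" for x
      using f(1) assms(2) that by auto
    show "(f \<circ> h) x \<noteq> (f \<circ> h) y" if "x \<in> V" "y \<in> V" "adj x y" for x y
      using f(2) assms(2,3) that by (simp add: image_subset_iff)
  qed
qed

lemma chromatic_number_le: "colourable V adj k \<Longrightarrow> chromatic_number V adj \<le> k"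
  unfolding chromatic_number_def colourable_def[symmetric] by (rule Least_le)

lemma chromatic_number_eq_Suc:
  assumes "colourable V adj (Suc k)" "\<not> colourable V adj k"
  shows "chromatic_number V adj = Suc k"
  unfolding chromatic_number_def colourable_def[symmetric]
proof (rule Least_equality)
  show "colourable V adj m \<Longrightarrow> Suc k \<le> m" for m
    using assms(2) colourable_mono[of V adj m k] by linarith
qed (fact assms(1))

text \<open>Recolour \<open>a\<close> by the colour of \<open>g a\<close>, or by that of \<open>s a\<close> when \<open>g a\<close> has the colour of
  \<open>w\<close>; the colour of \<open>w\<close> is then unused.\<close>

lemma colourable_reduce:
  assumes col: "colourable V adj (Suc k)" and w: "w \<in> V" and "g ` A \<subseteq> V" "s ` A \<subseteq> V"
    and w_s: "\<And>a. a \<in> A \<Longrightarrow> adj w (s a)"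
    and g_g: "\<And>a b. a \<in> A \<Longrightarrow> b \<in> A \<Longrightarrow> adjA a b \<Longrightarrow> adj (g a) (g b)"
    and s_g: "\<And>a b. a \<in> A \<Longrightarrow> b \<in> A \<Longrightarrow> adjA a b \<Longrightarrow> adj (s a) (g b)"
    and g_s: "\<And>a b. a \<in> A \<Longrightarrow> b \<in> A \<Longrightarrow> adjA a b \<Longrightarrow> adj (g a) (s b)"
  shows "colourable A adjA k"
proof -
  have gV: "g a \<in> V" and sV: "s a \<in> V" if "a \<in> A" for a using that assms(3,4) by auto
  obtain f where f_lt: "\<And>x. x \<in> V \<Longrightarrow> f x < Suc k"
    and f_adj: "\<And>x y. x \<in> V \<Longrightarrow> y \<in> V \<Longrightarrow> adj x y \<Longrightarrow> f x \<noteq> f y"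
    using col unfolding colourable_def by blast
  define c where "c = f w"
  define x where "x a = (if f (g a) = c then f (s a) else f (g a))" for a
  have x: "x a \<noteq> c" "x a < Suc k" if a: "a \<in> A" for a
  proof -
    have "f (s a) \<noteq> c" using f_adj[OF w sV w_s] a unfolding c_def by metis
    then show "x a \<noteq> c" "x a < Suc k" unfolding x_def using f_lt gV sV a by auto
  qed
  have x_adj: "x a \<noteq> x b" if "a \<in> A" "b \<in> A" "adjA a b" for a b
    using f_adj[OF gV gV g_g] f_adj[OF sV gV s_g] f_adj[OF gV sV g_s] that unfolding x_def by metis
  show ?thesis
  proof (rule colourableI[of A "\<lambda>a. if x a > c then x a - 1 else x a"])
    show "(if x a > c then x a - 1 else x a) < k" if "a \<in> A" for a
      using x[OF that] f_lt[OF w] unfolding c_def by auto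
    show "(if x a > c then x a - 1 else x a) \<noteq> (if x b > c then x b - 1 else x b)"
      if "a \<in> A" "b \<in> A" "adjA a b" for a b
      using x_adj[OF that] x[OF that(1)] x[OF that(2)] by auto
  qed
qed

section \<open>Upper bounds\<close>

lemma diagonal_2_n_if_none_at_1:
  assumes n: "n \<ge> 4" and T: "T \<in> triangulations n" and none: "\<And>j. {1, j} \<notin> T"
  shows "{2, n} \<in> T"
proof (rule ccontr)
  have n3: "n \<ge> 3" using n by simp
  assume "{2, n} \<notin> T"
  moreover have "{2, n} \<in> diags n" using n by (intro diagsI) auto
  ultimately obtain e where e: "e \<in> T" "crosses {2, n} e"
    using triangulations_maximal[OF T] by blast
  obtain z w where zw: "e = {z, w}" "1 \<le> z" "z + 2 \<le> w" "w \<le> n"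
    using triangulation_diagE[OF n3 T e(1)] by metis
  have "z = 1" using e(2) zw crosses_iff[of 2 n z w] n by auto
  then show False using none e zw by auto
qed

lemma colourable_triangulations:
  assumes n: "n \<ge> 4"
  shows "colourable (triangulations n) kneser_adj (n - 2)"
proof -
  have n3: "n \<ge> 3" using n by simp
  define f where
    "f S = (if \<exists>j. {1, j} \<in> S then (LEAST j. {1, j} \<in> S) - 3 else n - 3)" for S
  have f: "f S < n - 3 \<and> {1, f S + 3} \<in> S \<or> f S = n - 3 \<and> {2, n} \<in> S"
    if S: "S \<in> triangulations n" for S
  proof (cases "\<exists>j. {1, j} \<in> S")
    case True
    then have mem: "{1, LEAST j. {1, j} \<in> S} \<in> S" by (metis LeastI)
    obtain a b where "{1, LEAST j. {1, j} \<in> S} = {a, b}" "1 \<le> a" "a + 2 \<le> b" "b \<le> n"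
      "\<not> (a = 1 \<and> b = n)"
      using triangulation_diagE[OF n3 S mem] by metis
    then have "3 \<le> (LEAST j. {1, j} \<in> S)" "(LEAST j. {1, j} \<in> S) < n"
      by (auto simp: doubleton_eq_iff)
    moreover have "f S = (LEAST j. {1, j} \<in> S) - 3" using True unfolding f_def by simp
    ultimately have "f S < n - 3" "f S + 3 = (LEAST j. {1, j} \<in> S)" by linarith+
    then show ?thesis using mem by simp
  next
    case False
    then show ?thesis using diagonal_2_n_if_none_at_1[OF n S] unfolding f_def by auto
  qed
  show ?thesis
  proof (rule colourableI[of _ f])
    show "f S < n - 2" if "S \<in> triangulations n" for S
      using f[OF that] n by linarith
    show "f S \<noteq> f S'" if "S \<in> triangulations n" "S' \<in> triangulations n" "kneser_adj S S'"
      for S S'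
      using f[OF that(1)] f[OF that(2)] that(3) unfolding kneser_adj_def by auto
  qed
qed

definition star :: "nat \<Rightarrow> nat \<Rightarrow> nat set set" where
  "star n v = {d \<in> diags n. v \<in> d}"

lemma is_star_iff: "is_star n T \<longleftrightarrow> (\<exists>v\<in>{1..n}. T = star n v)"
  unfolding is_star_def star_def ..

lemma star_triangulation:
  assumes n: "n \<ge> 3"
  shows "star n n \<in> triangulations n"
proof (rule triangulationsI)
  show "star n n \<subseteq> diags n" unfolding star_def by blast
  show "\<not> crosses d e" if "d \<in> star n n" "e \<in> star n n" for d e
    using that crosses_disjoint unfolding star_def by blast
  show "\<exists>e\<in>star n n. crosses d e" if d: "d \<in> diags n" "d \<notin> star n n" for d
  proof -
    obtain a b where ab: "d = {a, b}" "1 \<le> a" "a + 2 \<le> b" "b \<le> n"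
      using diagsE[OF n d(1)] by metis
    have "b \<noteq> n" using d ab unfolding star_def by auto
    then have "{a + 1, n} \<in> star n n" "crosses {a, b} {a + 1, n}"
      using ab crosses_iff[of a b "a + 1" n] by (auto intro!: diagsI[OF n] simp: star_def)
    then show ?thesis using ab by blast
  qed
qed

lemma triangulation_eq_star:
  assumes T: "T \<in> triangulations n" and at_v: "\<And>d. d \<in> T \<Longrightarrow> v \<in> d"
  shows "T = star n v"
proof
  show "T \<subseteq> star n v" using at_v triangulations_subset[OF T] unfolding star_def by blast
  show "star n v \<subseteq> T"
  proof
    fix d assume d: "d \<in> star n v"
    show "d \<in> T"
    proof (rule ccontr)
      assume "d \<notin> T"
      then obtain e where "e \<in> T" "crosses d e"
        using triangulations_maximal[OF T] d unfolding star_def by blast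
      then show False using crosses_disjoint[of d e] at_v d unfolding star_def by blast
    qed
  qed
qed

text \<open>If \<open>{a, a + 2} \<notin> T\<close>, it is crossed by a diagonal \<open>{a + 1, w}\<close> of \<open>T\<close> with \<open>w \<le> b\<close>,
  which is shorter than \<open>{a, b}\<close>.\<close>

lemma nested_ear_diagonal:
  assumes n: "n \<ge> 3" and T: "T \<in> triangulations n" and ab: "{a, b} \<in> T" "a < b"
  shows "\<exists>c. a \<le> c \<and> c + 2 \<le> b \<and> {c, c + 2} \<in> T"
  using ab
proof (induction "b - a" arbitrary: a b rule: less_induct)
  case less
  obtain x y where "{a, b} = {x, y}" "1 \<le> x" "x + 2 \<le> y" "y \<le> n"
    using triangulation_diagE[OF n T less.prems(1)] by metis
  with less.prems(2) have ab: "1 \<le> a" "a + 2 \<le> b" "b \<le> n" by (auto simp: doubleton_eq_iff)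
  show ?case
  proof (cases "{a, a + 2} \<in> T")
    case True
    then show ?thesis using ab by blast
  next
    case False
    then have "a + 3 \<le> b" using ab less.prems(1) by (cases "b = a + 2") auto
    then have "{a, a + 2} \<in> diags n" using ab by (intro diagsI[OF n]) auto
    then obtain e where e: "e \<in> T" "crosses {a, a + 2} e"
      using triangulations_maximal[OF T] False by blast
    obtain z w where zw: "e = {z, w}" "1 \<le> z" "z + 2 \<le> w"
      using triangulation_diagE[OF n T e(1)] by metis
    have "\<not> crosses {a, b} {z, w}"
      using triangulations_not_crosses[OF T less.prems(1) e(1)] zw by simp
    then have "z = a + 1" "a + 3 \<le> w" "w \<le> b"
      using e(2) zw \<open>a + 3 \<le> b\<close> crosses_iff[of a "a + 2" z w] crosses_iff[of a b z w] by auto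
    moreover have "w - (a + 1) < b - a" using \<open>w \<le> b\<close> \<open>a + 3 \<le> w\<close> by linarith
    ultimately obtain c where "a + 1 \<le> c" "c + 2 \<le> w" "{c, c + 2} \<in> T"
      using less.hyps[of w "a + 1"] e zw by auto
    then show ?thesis using \<open>w \<le> b\<close> by (intro exI[of _ c]) auto
  qed
qed

lemma ear_diagonal_avoiding_last:
  assumes n: "n \<ge> 3" and T: "T \<in> triangulations n" and not_star: "T \<noteq> star n n"
  shows "\<exists>a. 1 \<le> a \<and> a + 3 \<le> n \<and> {a, a + 2} \<in> T"
proof -
  obtain d where d: "d \<in> T" "n \<notin> d" using triangulation_eq_star[OF T] not_star by blast
  obtain a b where ab: "d = {a, b}" "1 \<le> a" "a + 2 \<le> b" "b \<le> n"
    using triangulation_diagE[OF n T d(1)] by metis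
  obtain c where "a \<le> c" "c + 2 \<le> b" "{c, c + 2} \<in> T"
    using nested_ear_diagonal[OF n T, of a b] d ab by auto
  then show ?thesis using ab d by (intro exI[of _ c]) auto
qed

lemma colourable_triangulations_minus_star:
  assumes n: "n \<ge> 3"
  shows "colourable (triangulations n - {star n n}) kneser_adj (n - 3)"
proof -
  define ear where "ear S = (LEAST a. {a, a + 2} \<in> S)" for S :: "nat set set"
  have ear: "1 \<le> ear S" "ear S + 3 \<le> n" "{ear S, ear S + 2} \<in> S"
    if S: "S \<in> triangulations n" "S \<noteq> star n n" for S
  proof -
    obtain a where a: "1 \<le> a" "a + 3 \<le> n" "{a, a + 2} \<in> S"
      using ear_diagonal_avoiding_last[OF n S] by blast
    show mem: "{ear S, ear S + 2} \<in> S" unfolding ear_def using a(3) by (rule LeastI)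
    have "ear S \<le> a" unfolding ear_def using a(3) by (rule Least_le)
    then show "ear S + 3 \<le> n" using a(2) by linarith
    obtain x y where "{ear S, ear S + 2} = {x, y}" "1 \<le> x" "x + 2 \<le> y"
      using triangulation_diagE[OF n S(1) mem] by metis
    then show "1 \<le> ear S" by (auto simp: doubleton_eq_iff)
  qed
  show ?thesis
  proof (rule colourableI[of _ "\<lambda>S. ear S - 1"])
    show "ear S - 1 < n - 3" if "S \<in> triangulations n - {star n n}" for S
      using ear[of S] that by auto
    show "ear S - 1 \<noteq> ear S' - 1" if "S \<in> triangulations n - {star n n}"
      "S' \<in> triangulations n - {star n n}" "kneser_adj S S'" for S S'
    proof
      assume "ear S - 1 = ear S' - 1"
      moreover have "1 \<le> ear S" "{ear S, ear S + 2} \<in> S" "1 \<le> ear S'" "{ear S', ear S' + 2} \<in> S'"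
        using ear[of S] ear[of S'] that(1,2) by auto
      ultimately have "{ear S, ear S + 2} \<in> S \<inter> S'" by (metis IntI le_add_diff_inverse2)
      then show False using that(3) unfolding kneser_adj_def by auto
    qed
  qed
qed

text \<open>Away from the star at \<open>n\<close> there is an ear diagonal \<open>{a, a + 2}\<close>; either \<open>{a, a + 3}\<close> is a
  diagonal of \<open>T\<close>, or the diagonal crossing it must start at \<open>a + 2\<close>.\<close>

lemma two_diagonals_at_a_vertex:
  assumes n: "n \<ge> 5" and T: "T \<in> triangulations n"
  shows "\<exists>v d e. d \<in> T \<and> e \<in> T \<and> d \<noteq> e \<and> v \<in> d \<and> v \<in> e"
proof (cases "T = star n n")
  case True
  have "{2, n} \<in> T" "{3, n} \<in> T" using n unfolding True star_def by (auto intro!: diagsI)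
  then show ?thesis
    by (intro exI[of _ n] exI[of _ "{2, n}"] exI[of _ "{3, n}"]) (auto simp: doubleton_eq_iff)
next
  case False
  have n3: "n \<ge> 3" using n by simp
  obtain a where a: "1 \<le> a" "a + 3 \<le> n" "{a, a + 2} \<in> T"
    using ear_diagonal_avoiding_last[OF n3 T False] by blast
  show ?thesis
  proof (cases "{a, a + 3} \<in> T")
    case True
    then show ?thesis using a
      by (intro exI[of _ a] exI[of _ "{a, a + 2}"] exI[of _ "{a, a + 3}"])
        (auto simp: doubleton_eq_iff)
  next
    case False
    moreover have "{a, a + 3} \<in> diags n" using a n by (intro diagsI) auto
    ultimately obtain e where e: "e \<in> T" "crosses {a, a + 3} e"
      using triangulations_maximal[OF T] by blast
    obtain z w where zw: "e = {z, w}" "1 \<le> z" "z + 2 \<le> w"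
      using triangulation_diagE[OF n3 T e(1)] by metis
    have "\<not> crosses {a, a + 2} {z, w}" using triangulations_not_crosses[OF T a(3) e(1)] zw by simp
    then have "a + 2 \<in> e" "e \<noteq> {a, a + 2}"
      using e(2) zw crosses_iff[of a "a + 3" z w] crosses_iff[of a "a + 2" z w]
      by (auto simp: doubleton_eq_iff)
    then show ?thesis using a e by blast
  qed
qed

lemma is_star_if_le_4:
  assumes "3 \<le> n" "n \<le> 4" and T: "T \<in> triangulations n"
  shows "is_star n T"
proof (cases "n = 3")
  case True
  then have "T = {}" using T triangulations_3 by blast
  moreover have "star 3 1 = {}" by (simp add: star_def diags_3)
  ultimately show ?thesis using True unfolding is_star_iff by force
next
  case False
  then have n: "n = 4" using assms by simp
  have sub: "T \<subseteq> {{1, 3}, {2, 4}}" using triangulations_subset[OF T] n by (simp add: diags_4)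
  have nonempty: "T \<noteq> {}"
    using triangulations_maximal[OF T, of "{1, 3}"] n by (auto simp: diags_4)
  have "\<not> ({1, 3} \<in> T \<and> {2, 4} \<in> T)"
    using triangulations_not_crosses[OF T] crosses_iff[of 1 3 2 4] by auto
  then consider "T = {{1, 3}}" | "T = {{2, 4}}" using sub nonempty by blast
  then show ?thesis
  proof cases
    case 1
    moreover have "star 4 1 = {{1, 3}}" by (auto simp: star_def diags_4)
    ultimately show ?thesis using n unfolding is_star_iff by (intro bexI[of _ 1]) auto
  next
    case 2
    moreover have "star 4 2 = {{2, 4}}" by (auto simp: star_def diags_4)
    ultimately show ?thesis using n unfolding is_star_iff by (intro bexI[of _ 2]) auto
  qed
qed

section \<open>Extending a triangulation by a vertex\<close>

text \<open>The apex of a triangulation \<open>T\<close> of the \<open>m\<close>-gon is the third vertex of the triangle of \<open>T\<close>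
  on the side \<open>{1, m}\<close>, i.e. the vertex \<open>j\<close> with \<open>1 < j < m\<close> that no diagonal of \<open>T\<close> separates
  from that side.\<close>

definition is_apex :: "nat \<Rightarrow> nat set set \<Rightarrow> nat \<Rightarrow> bool" where
  "is_apex m T j \<longleftrightarrow> 2 \<le> j \<and> j < m \<and> (\<forall>a b. {a, b} \<in> T \<longrightarrow> a < j \<longrightarrow> b \<le> j)"

lemma apex_diagonals:
  assumes m: "m \<ge> 3" and T: "T \<in> triangulations m" and j: "is_apex m T j"
  shows "(j = 2 \<or> {1, j} \<in> T) \<and> (j = m - 1 \<or> {j, m} \<in> T)"
proof -
  have j_bounds: "2 \<le> j" "j < m" and no_sep: "\<And>a b. {a, b} \<in> T \<Longrightarrow> a < j \<Longrightarrow> b \<le> j"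
    using j unfolding is_apex_def by auto
  have side: "{x, y} \<in> T"
    if xy: "{x, y} \<in> diags m" "x < y" "x = 1 \<or> y = m" "x = j \<or> y = j" for x y
  proof (rule ccontr)
    assume "{x, y} \<notin> T"
    then obtain e where e: "e \<in> T" "crosses {x, y} e"
      using triangulations_maximal[OF T xy(1)] by blast
    obtain z w where zw: "e = {z, w}" "1 \<le> z" "z + 2 \<le> w" "w \<le> m"
      using triangulation_diagE[OF m T e(1)] by metis
    have "z < x \<and> x < w \<or> z < y \<and> y < w" using e(2) zw crosses_iff[of x y z w] xy(2) by auto
    then have "z < j \<and> j < w" using xy(3,4) zw j_bounds by auto
    then show False using no_sep e zw by fastforce
  qed
  have "{1, j} \<in> T" if "j \<noteq> 2"
  proof -
    have "{1, j} \<in> diags m" using that j_bounds by (intro diagsI[OF m]) auto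
    then show ?thesis using side[of 1 j] j_bounds by simp
  qed
  moreover have "{j, m} \<in> T" if "j \<noteq> m - 1"
  proof -
    have "{j, m} \<in> diags m" using that j_bounds by (intro diagsI[OF m]) auto
    then show ?thesis using side[of j m] j_bounds by simp
  qed
  ultimately show ?thesis by blast
qed

lemma apex_exists:
  assumes m: "m \<ge> 3" and T: "T \<in> triangulations m"
  shows "\<exists>j. is_apex m T j"
proof (cases "\<exists>x. {1, x} \<in> T")
  case True
  define J where "J = {x. {1, x} \<in> T}"
  have "J \<subseteq> {1..m}" using triangulation_vertices[OF T] unfolding J_def by blast
  then have fin: "finite J" by (rule finite_subset) simp
  have ne: "J \<noteq> {}" using True unfolding J_def by blast
  have j: "{1, Max J} \<in> T" using Max_in[OF fin ne] unfolding J_def by simp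
  have j_max: "x \<le> Max J" if "{1, x} \<in> T" for x using Max_ge[OF fin] that unfolding J_def by simp
  obtain a b where ab: "{1, Max J} = {a, b}" "1 \<le> a" "a + 2 \<le> b" "b \<le> m" "\<not> (a = 1 \<and> b = m)"
    using triangulation_diagE[OF m T j] by metis
  then have "a = 1" "b = Max J" unfolding doubleton_eq_iff by linarith+
  then have bounds: "3 \<le> Max J" "Max J < m" using ab by linarith+
  have "b \<le> Max J" if ab: "{a, b} \<in> T" "a < Max J" for a b
  proof (rule ccontr)
    assume "\<not> b \<le> Max J"
    moreover have "1 \<le> a" using triangulation_vertices[OF T ab(1)] by simp
    ultimately have "a = 1 \<or> crosses {1, Max J} {a, b}"
      using crosses_iff[of 1 "Max J" a b] ab(2) bounds by linarith
    then show False using j_max[of b] triangulations_not_crosses[OF T j ab(1)] \<open>\<not> b \<le> Max J\<close> ab(1)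
      by blast
  qed
  then have "is_apex m T (Max J)" using bounds unfolding is_apex_def by auto
  then show ?thesis ..
next
  case False
  have "b \<le> 2" if "{a, b} \<in> T" "a < 2" for a b
  proof -
    have "1 \<le> a" using triangulation_vertices[OF T that(1)] by simp
    then have "a = 1" using that(2) by simp
    then show ?thesis using False that(1) by blast
  qed
  then have "is_apex m T 2" using m unfolding is_apex_def by simp
  then show ?thesis ..
qed

lemma apex_unique:
  assumes m: "m \<ge> 3" and T: "T \<in> triangulations m" and "is_apex m T j" "is_apex m T j'"
  shows "j = j'"
proof -
  have False if "is_apex m T j" "is_apex m T j'" "j < j'" for j j'
  proof -
    have "{1, j'} \<in> T" "{j, m} \<in> T"
      using apex_diagonals[OF m T that(1)] apex_diagonals[OF m T that(2)] that
      unfolding is_apex_def by auto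
    moreover have "crosses {1, j'} {j, m}"
      using crosses_iff[of 1 j' j m] that unfolding is_apex_def by auto
    ultimately show False using triangulations_not_crosses[OF T] by blast
  qed
  then show ?thesis using assms(3,4) by (metis linorder_neqE_nat)
qed

definition apex :: "nat \<Rightarrow> nat set set \<Rightarrow> nat" where
  "apex m T = (THE j. is_apex m T j)"

lemma is_apex_apex: "m \<ge> 3 \<Longrightarrow> T \<in> triangulations m \<Longrightarrow> is_apex m T (apex m T)"
  unfolding apex_def by (rule theI') (use apex_exists apex_unique in blast)

lemma apex_eqI: "m \<ge> 3 \<Longrightarrow> T \<in> triangulations m \<Longrightarrow> is_apex m T j \<Longrightarrow> apex m T = j"
  using apex_unique is_apex_apex by blast

text \<open>Inserting the vertex \<open>Suc m\<close> between \<open>m\<close> and \<open>1\<close> turns the triangle on the side \<open>{1, m}\<close>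
  into a quadrilateral; its two diagonals give two triangulations of the \<open>Suc m\<close>-gon.\<close>

definition apex_extension :: "nat \<Rightarrow> nat set set \<Rightarrow> nat set set" where
  "apex_extension m T = insert {apex m T, Suc m} T"

definition ear_extension :: "nat \<Rightarrow> nat set set \<Rightarrow> nat set set" where
  "ear_extension m T = insert {1, m} T"

lemma apex_diagonal_not_crosses:
  assumes m: "m \<ge> 3" and T: "T \<in> triangulations m" and d: "d \<in> T"
  shows "\<not> crosses d {apex m T, Suc m}"
proof
  assume c: "crosses d {apex m T, Suc m}"
  have j: "2 \<le> apex m T" "apex m T < m" and no_sep: "\<And>a b. {a, b} \<in> T \<Longrightarrow> a < apex m T \<Longrightarrow> b \<le> apex m T"
    using is_apex_apex[OF m T] unfolding is_apex_def by auto
  obtain a b where ab: "d = {a, b}" "a + 2 \<le> b" "b \<le> m"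
    using triangulation_diagE[OF m T d] by metis
  then have "a < apex m T" "apex m T < b" using c crosses_iff[of a b "apex m T" "Suc m"] j by auto
  then show False using no_sep d ab by fastforce
qed

lemma separated_if_not_apex:
  assumes m: "m \<ge> 3" and T: "T \<in> triangulations m"
    and a: "2 \<le> a" "a < m" "a \<noteq> apex m T"
  obtains x y where "{x, y} \<in> T" "x < a" "a < y" "y \<le> m"
proof -
  have "\<not> is_apex m T a" using apex_eqI[OF m T, of a] a(3) by auto
  then obtain x y where xy: "{x, y} \<in> T" "x < a" "a < y" using a unfolding is_apex_def by auto
  moreover have "y \<le> m" using triangulation_vertices[OF T xy(1)] by auto
  ultimately show ?thesis using that by blast
qed

lemma apex_extension_triangulation:
  assumes m: "m \<ge> 3" and T: "T \<in> triangulations m"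
  shows "apex_extension m T \<in> triangulations (Suc m)"
proof -
  define j where "j = apex m T"
  have j: "2 \<le> j" "j < m" using is_apex_apex[OF m T] unfolding is_apex_def j_def by auto
  have m': "Suc m \<ge> 3" using m by simp
  show ?thesis unfolding apex_extension_def j_def[symmetric]
  proof (rule triangulationsI)
    show "insert {j, Suc m} T \<subseteq> diags (Suc m)"
      using triangulations_subset[OF T] diags_mono[OF m] j by (auto intro!: diagsI[OF m'])
    show "\<not> crosses d e" if "d \<in> insert {j, Suc m} T" "e \<in> insert {j, Suc m} T" for d e
      using that apex_diagonal_not_crosses[OF m T] crosses_sym crosses_disjoint
        triangulations_not_crosses[OF T] unfolding j_def by blast
    show "\<exists>e\<in>insert {j, Suc m} T. crosses d e"
      if d: "d \<in> diags (Suc m)" "d \<notin> insert {j, Suc m} T" for d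
    proof -
      obtain a b where ab: "d = {a, b}" "1 \<le> a" "a + 2 \<le> b" "b \<le> Suc m" "\<not> (a = 1 \<and> b = Suc m)"
        using diagsE[OF m' d(1)] by metis
      consider "b = Suc m" | "a = 1" "b = m" | "b \<le> m" "\<not> (a = 1 \<and> b = m)" using ab by linarith
      then show ?thesis
      proof cases
        case 1
        then obtain x y where xy: "{x, y} \<in> T" "x < a" "a < y" "y \<le> m"
          using separated_if_not_apex[OF m T, of a] ab d(2) unfolding j_def by auto
        then have "crosses d {x, y}" using crosses_iff[of a b x y] ab 1 by auto
        then show ?thesis using xy(1) by blast
      next
        case 2
        then have "crosses d {j, Suc m}" using ab j crosses_iff[of 1 m j "Suc m"] by auto
        then show ?thesis by blast
      next
        case 3
        then have "d \<in> diags m" unfolding ab(1) by (intro diagsI[OF m]) (use ab in auto)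
        moreover have "d \<notin> T" using d(2) by blast
        ultimately show ?thesis using triangulations_maximal[OF T] by blast
      qed
    qed
  qed
qed

lemma ear_extension_triangulation:
  assumes m: "m \<ge> 3" and T: "T \<in> triangulations m"
  shows "ear_extension m T \<in> triangulations (Suc m)"
  unfolding ear_extension_def
proof (rule triangulationsI)
  have m': "Suc m \<ge> 3" using m by simp
  show "insert {1, m} T \<subseteq> diags (Suc m)"
    using triangulations_subset[OF T] diags_mono[OF m] m by (auto intro!: diagsI[OF m'])
  have "\<not> crosses {1, m} e" if e: "e \<in> T" for e
  proof -
    obtain a b where "e = {a, b}" "1 \<le> a" "a + 2 \<le> b" "b \<le> m"
      using triangulation_diagE[OF m T e] by metis
    then show ?thesis using crosses_iff[of 1 m a b] m by auto
  qed
  then show "\<not> crosses d e" if "d \<in> insert {1, m} T" "e \<in> insert {1, m} T" for d e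
    using that crosses_sym crosses_disjoint triangulations_not_crosses[OF T] by blast
  show "\<exists>e\<in>insert {1, m} T. crosses d e" if d: "d \<in> diags (Suc m)" "d \<notin> insert {1, m} T" for d
  proof -
    obtain a b where ab: "d = {a, b}" "1 \<le> a" "a + 2 \<le> b" "b \<le> Suc m" "\<not> (a = 1 \<and> b = Suc m)"
      using diagsE[OF m' d(1)] by metis
    show ?thesis
    proof (cases "b = Suc m")
      case True
      then have "crosses d {1, m}" using ab crosses_iff[of a b 1 m] by auto
      then show ?thesis by blast
    next
      case False
      then have "d \<in> diags m" unfolding ab(1) using d(2) ab by (intro diagsI[OF m]) auto
      moreover have "d \<notin> T" using d(2) by blast
      ultimately show ?thesis using triangulations_maximal[OF T] by blast
    qed
  qed
qed

lemma kneser_adjI: "X \<inter> Y = {} \<Longrightarrow> X \<noteq> {} \<Longrightarrow> kneser_adj X Y"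
  unfolding kneser_adj_def by blast

lemma apex_kneser_adj_neq:
  assumes m: "m \<ge> 3" and T: "T \<in> triangulations m" "T' \<in> triangulations m"
    and adj: "kneser_adj T T'"
  shows "apex m T \<noteq> apex m T'"
proof
  assume eq: "apex m T = apex m T'"
  define j where "j = apex m T"
  have "j \<noteq> 2 \<or> j \<noteq> m - 1"
  proof (rule ccontr)
    assume "\<not> ?thesis"
    then have "m = 3" using is_apex_apex[OF m T(1)] unfolding is_apex_def j_def by auto
    then show False using T adj triangulations_3 unfolding kneser_adj_def by auto
  qed
  then have "{1, j} \<in> T \<inter> T' \<or> {j, m} \<in> T \<inter> T'"
    using apex_diagonals[OF m T(1) is_apex_apex[OF m T(1)]]
      apex_diagonals[OF m T(2) is_apex_apex[OF m T(2)]] eq unfolding j_def by auto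
  then show False using adj unfolding kneser_adj_def by blast
qed

lemma side_notin_diags:
  assumes "m \<ge> 3"
  shows "{1, m} \<notin> diags m"
proof
  assume "{1, m} \<in> diags m"
  then obtain a b where "{1, m} = {a, b}" "a + 2 \<le> b" "\<not> (a = 1 \<and> b = m)"
    using diagsE[OF assms] by metis
  then show False unfolding doubleton_eq_iff by linarith
qed

lemma extensions_kneser_adj:
  assumes m: "m \<ge> 3" and T: "T \<in> triangulations m" "T' \<in> triangulations m"
    and adj: "kneser_adj T T'"
  shows "kneser_adj (apex_extension m T) (apex_extension m T')"
    and "kneser_adj (ear_extension m T) (apex_extension m T')"
    and "kneser_adj (apex_extension m T) (ear_extension m T')"
proof -
  have disj: "T \<inter> T' = {}" using adj unfolding kneser_adj_def by blast
  have new: "{j, Suc m} \<notin> T" "{j, Suc m} \<notin> T'" for j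
    using triangulation_vertices[OF T(1), of "{j, Suc m}"]
      triangulation_vertices[OF T(2), of "{j, Suc m}"] by auto
  have side: "{1, m} \<notin> T" "{1, m} \<notin> T'"
    using side_notin_diags[OF m] triangulations_subset T by blast+
  have "{apex m T, Suc m} \<noteq> {apex m T', Suc m}"
    using apex_kneser_adj_neq[OF m T adj] by (auto simp: doubleton_eq_iff)
  moreover have "{1, m} \<noteq> {j, Suc m}" "{j, Suc m} \<noteq> {1, m}" for j
    using m by (auto simp: doubleton_eq_iff)
  ultimately show "kneser_adj (apex_extension m T) (apex_extension m T')"
    and "kneser_adj (ear_extension m T) (apex_extension m T')"
    and "kneser_adj (apex_extension m T) (ear_extension m T')"
    using disj new side unfolding apex_extension_def ear_extension_def
    by (auto intro!: kneser_adjI)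
qed

lemma star_kneser_adj_ear_extension:
  assumes m: "m \<ge> 3" and T: "T \<in> triangulations m"
  shows "kneser_adj (star (Suc m) (Suc m)) (ear_extension m T)"
proof (rule kneser_adjI)
  have "{2, Suc m} \<in> diags (Suc m)" using m by (auto intro!: diagsI)
  then show "star (Suc m) (Suc m) \<noteq> {}" unfolding star_def by auto
  show "star (Suc m) (Suc m) \<inter> ear_extension m T = {}"
    using triangulation_vertices[OF T] m unfolding star_def ear_extension_def by fastforce
qed

lemma colourable_triangulations_reduce:
  assumes m: "m \<ge> 3" and col: "colourable V kneser_adj (Suc k)"
    and star: "star (Suc m) (Suc m) \<in> V"
    and ext: "\<And>T. T \<in> triangulations m \<Longrightarrow> apex_extension m T \<in> V \<and> ear_extension m T \<in> V"
  shows "colourable (triangulations m) kneser_adj k"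
  by (rule colourable_reduce[OF col star,
        where g = "apex_extension m" and s = "ear_extension m" and A = "triangulations m"])
    (use ext star_kneser_adj_ear_extension[OF m] extensions_kneser_adj[OF m] in auto)

lemma not_colourable_triangulations:
  assumes "n \<ge> 3"
  shows "\<not> colourable (triangulations n) kneser_adj (n - 3)"
  using assms
proof (induction n rule: nat_induct_at_least)
  case base
  show ?case using not_colourable_0[of "{{}}"] triangulations_3 by simp
next
  case (Suc n)
  show ?case
  proof
    assume "colourable (triangulations (Suc n)) kneser_adj (Suc n - 3)"
    then have "colourable (triangulations (Suc n)) kneser_adj (Suc (n - 3))"
      by (simp only: Suc_diff_le[OF Suc.hyps])
    then have "colourable (triangulations n) kneser_adj (n - 3)"
      using Suc.hyps star_triangulation apex_extension_triangulation ear_extension_triangulation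
      by (intro colourable_triangulations_reduce) auto
    then show False using Suc.IH by blast
  qed
qed

lemma not_colourable_minus_two_diagonals_at_last:
  assumes n: "n \<ge> 5" and T: "T \<in> triangulations n" "T \<noteq> star n n"
    and de: "d \<in> T" "e \<in> T" "d \<noteq> e" "n \<in> d" "n \<in> e"
  shows "\<not> colourable (triangulations n - {T}) kneser_adj (n - 3)"
proof
  define m where "m = n - 1"
  have n_eq: "n = Suc m" and m: "m \<ge> 3" using n unfolding m_def by auto
  have last_notin: "n \<notin> d'" if "S \<in> triangulations m" "d' \<in> S" for S d'
    using triangulation_vertices[OF that] n_eq by auto
  have "apex_extension m S \<noteq> T" if S: "S \<in> triangulations m" for S
  proof
    assume "apex_extension m S = T"
    then have "d = {apex m S, n}" "e = {apex m S, n}"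
      using de last_notin[OF S] n_eq unfolding apex_extension_def by auto
    then show False using de(3) by simp
  qed
  moreover have "ear_extension m S \<noteq> T" if S: "S \<in> triangulations m" for S
    using de last_notin[OF S] n_eq unfolding ear_extension_def by auto
  moreover assume "colourable (triangulations n - {T}) kneser_adj (n - 3)"
  moreover have "n - 3 = Suc (m - 3)" using n unfolding m_def by simp
  ultimately have "colourable (triangulations m) kneser_adj (m - 3)"
    using star_triangulation apex_extension_triangulation ear_extension_triangulation m T(2)
    unfolding n_eq by (intro colourable_triangulations_reduce) auto
  then show False using not_colourable_triangulations m by blast
qed

section \<open>Rotations\<close>

definition rot :: "nat \<Rightarrow> nat \<Rightarrow> nat" where
  "rot n i = (if i = n then 1 else Suc i)"

lemma funpow_rot:
  assumes "i \<in> {1..n}"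
  shows "(rot n ^^ k) i = (i - 1 + k) mod n + 1"
proof (induction k)
  case 0
  have "(i - 1) mod n = i - 1" using assms by (intro mod_less) auto
  then show ?case using assms by simp
next
  case (Suc k)
  have "(i - 1 + k) mod n < n" using assms by simp
  moreover have "n \<ge> 1" using assms by simp
  ultimately have "rot n ((i - 1 + k) mod n + 1) = (i - 1 + Suc k) mod n + 1"
    unfolding rot_def by (auto simp: mod_Suc)
  then show ?case using Suc by simp
qed

lemma funpow_rot_inverse:
  assumes "i \<in> {1..n}" "a + b = n"
  shows "(rot n ^^ a) ((rot n ^^ b) i) = i"
proof -
  have "(rot n ^^ a) ((rot n ^^ b) i) = (rot n ^^ (a + b)) i"
    by (simp add: funpow_add)
  also have "\<dots> = (rot n ^^ n) i" using assms(2) by simp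
  also have "\<dots> = (i - 1 + n) mod n + 1" using funpow_rot[OF assms(1)] .
  also have "\<dots> = (i - 1) mod n + 1" by simp
  also have "\<dots> = i" using assms(1) by (subst mod_less) auto
  finally show ?thesis .
qed

lemma funpow_rot_to_last: "v \<in> {1..n} \<Longrightarrow> (rot n ^^ (n - v)) v = n"
  using funpow_rot[of v n "n - v"] by simp

lemma funpow_rot_from_last: "v \<in> {1..n} \<Longrightarrow> (rot n ^^ v) n = v"
  using funpow_rot_inverse[of v n v "n - v"] funpow_rot_to_last by simp

lemma rot_diag_image:
  assumes "a < b" "b \<le> n"
  shows "rot n ` {a, b} = (if b = n then {1, a + 1} else {a + 1, b + 1})"
proof -
  have "rot n a = a + 1" using assms unfolding rot_def by simp
  moreover have "rot n b = (if b = n then 1 else b + 1)" unfolding rot_def by simp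
  ultimately show ?thesis by (simp add: insert_commute)
qed

lemma rot_diags:
  assumes n: "n \<ge> 3" and d: "d \<in> diags n"
  shows "rot n ` d \<in> diags n"
proof -
  obtain a b where ab: "d = {a, b}" "1 \<le> a" "a + 2 \<le> b" "b \<le> n" "\<not> (a = 1 \<and> b = n)"
    using diagsE[OF n d] by metis
  have r: "rot n ` d = (if b = n then {1, a + 1} else {a + 1, b + 1})"
    using rot_diag_image[of a b n] ab by simp
  show ?thesis
  proof (cases "b = n")
    case True
    have "{1, a + 1} \<in> diags n" using ab True by (intro diagsI[OF n]) auto
    then show ?thesis using r True by simp
  next
    case False
    have "{a + 1, b + 1} \<in> diags n" using ab False by (intro diagsI[OF n]) auto
    then show ?thesis using r False by simp
  qed
qed

lemma rot_crosses:
  assumes n: "n \<ge> 3" and d: "d \<in> diags n" and e: "e \<in> diags n"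
  shows "crosses (rot n ` d) (rot n ` e) \<longleftrightarrow> crosses d e"
proof -
  obtain a b where ab: "d = {a, b}" "1 \<le> a" "a + 2 \<le> b" "b \<le> n"
    using diagsE[OF n d] by metis
  obtain c w where cw: "e = {c, w}" "1 \<le> c" "c + 2 \<le> w" "w \<le> n"
    using diagsE[OF n e] by metis
  have rd: "rot n ` d = (if b = n then {1, a + 1} else {a + 1, b + 1})"
    using rot_diag_image[of a b n] ab by simp
  have re: "rot n ` e = (if w = n then {1, c + 1} else {c + 1, w + 1})"
    using rot_diag_image[of c w n] cw by simp
  have cd: "crosses d e \<longleftrightarrow> a < c \<and> c < b \<and> b < w \<or> c < a \<and> a < w \<and> w < b"
    unfolding ab(1) cw(1) by (rule crosses_iff) (use ab cw in auto)
  consider "b = n" "w = n" | "b = n" "w \<noteq> n" | "b \<noteq> n" "w = n" | "b \<noteq> n" "w \<noteq> n"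
    by blast
  then show ?thesis
  proof cases
    case 1
    then have "n \<in> d \<inter> e" "1 \<in> rot n ` d \<inter> rot n ` e" using ab(1) cw(1) rd re by auto
    then show ?thesis using crosses_disjoint by (metis empty_iff)
  next
    case 2
    then have "rot n ` d = {1, a + 1}" "rot n ` e = {c + 1, w + 1}" using rd re by simp_all
    moreover have "crosses {1, a + 1} {c + 1, w + 1} \<longleftrightarrow> 1 < c + 1 \<and> c + 1 < a + 1 \<and> a + 1 < w + 1"
      using crosses_iff[of 1 "a + 1" "c + 1" "w + 1"] ab cw by auto
    ultimately show ?thesis using cd ab cw 2 by auto
  next
    case 3
    then have "rot n ` d = {a + 1, b + 1}" "rot n ` e = {1, c + 1}" using rd re by simp_all
    moreover have "crosses {a + 1, b + 1} {1, c + 1} \<longleftrightarrow> 1 < a + 1 \<and> a + 1 < c + 1 \<and> c + 1 < b + 1"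
      using crosses_iff[of "a + 1" "b + 1" 1 "c + 1"] ab cw by auto
    ultimately show ?thesis using cd ab cw 3 by auto
  next
    case 4
    then have "rot n ` d = {a + 1, b + 1}" "rot n ` e = {c + 1, w + 1}" using rd re by simp_all
    moreover have "crosses {a + 1, b + 1} {c + 1, w + 1} \<longleftrightarrow> crosses d e"
      unfolding cd by (subst crosses_iff) (use ab cw in auto)
    ultimately show ?thesis by simp
  qed
qed

lemma image_funpow_Suc: "(f ^^ Suc k) ` A = f ` (f ^^ k) ` A"
  by (simp add: image_comp)

lemma funpow_rot_diags:
  assumes n: "n \<ge> 3" and d: "d \<in> diags n"
  shows "(rot n ^^ k) ` d \<in> diags n"
proof (induction k)
  case (Suc k)
  show ?case unfolding image_funpow_Suc using rot_diags[OF n Suc] .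
qed (use d in simp)

lemma funpow_rot_crosses:
  assumes n: "n \<ge> 3" and d: "d \<in> diags n" and e: "e \<in> diags n"
  shows "crosses ((rot n ^^ k) ` d) ((rot n ^^ k) ` e) \<longleftrightarrow> crosses d e"
proof (induction k)
  case (Suc k)
  then show ?case
    using rot_crosses[OF n funpow_rot_diags[OF n d] funpow_rot_diags[OF n e]]
    by (simp only: image_funpow_Suc)
qed simp

lemma funpow_rot_image_inverse:
  assumes "d \<subseteq> {1..n}" "a + b = n"
  shows "(rot n ^^ a) ` (rot n ^^ b) ` d = d"
proof -
  have "(rot n ^^ a) ` (rot n ^^ b) ` d = (\<lambda>i. (rot n ^^ a) ((rot n ^^ b) i)) ` d"
    by (simp add: image_image)
  also have "\<dots> = id ` d"
    using funpow_rot_inverse[OF _ assms(2)] assms(1) by (intro image_cong) auto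
  finally show ?thesis by simp
qed

definition rotation :: "nat \<Rightarrow> nat \<Rightarrow> nat set set \<Rightarrow> nat set set" where
  "rotation n k T = (\<lambda>d. (rot n ^^ k) ` d) ` T"

lemma rotation_inverse:
  assumes "T \<subseteq> diags n" "a + b = n"
  shows "rotation n a (rotation n b T) = T"
proof -
  have "rotation n a (rotation n b T) = (\<lambda>d. (rot n ^^ a) ` (rot n ^^ b) ` d) ` T"
    unfolding rotation_def by (simp add: image_image)
  also have "\<dots> = id ` T"
    using funpow_rot_image_inverse[OF _ assms(2)] diags_subset_vertices assms(1)
    by (intro image_cong) auto
  finally show ?thesis by simp
qed

lemma inj_on_rotate_diags:
  assumes "k \<le> n"
  shows "inj_on (\<lambda>d. (rot n ^^ k) ` d) (diags n)"
proof (rule inj_on_inverseI[of _ "\<lambda>d. (rot n ^^ (n - k)) ` d"])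
  show "(rot n ^^ (n - k)) ` (rot n ^^ k) ` d = d" if "d \<in> diags n" for d
    using funpow_rot_image_inverse[OF diags_subset_vertices[OF that]] assms by simp
qed

lemma rotation_triangulation:
  assumes n: "n \<ge> 3" and T: "T \<in> triangulations n" and k: "k \<le> n"
  shows "rotation n k T \<in> triangulations n"
proof (rule triangulationsI)
  have T_diags: "T \<subseteq> diags n" using triangulations_subset[OF T] .
  show "rotation n k T \<subseteq> diags n"
    unfolding rotation_def using funpow_rot_diags[OF n] T_diags by blast
  show "\<not> crosses d e" if "d \<in> rotation n k T" "e \<in> rotation n k T" for d e
    using that triangulations_not_crosses[OF T] funpow_rot_crosses[OF n] T_diags
    unfolding rotation_def by blast
  show "\<exists>e\<in>rotation n k T. crosses d e" if d: "d \<in> diags n" "d \<notin> rotation n k T" for d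
  proof -
    define d' where "d' = (rot n ^^ (n - k)) ` d"
    have d': "d' \<in> diags n" unfolding d'_def using funpow_rot_diags[OF n d(1)] .
    have d_eq: "(rot n ^^ k) ` d' = d"
      unfolding d'_def using funpow_rot_image_inverse[OF diags_subset_vertices[OF d(1)]] k by simp
    then have "d' \<notin> T" using d(2) unfolding rotation_def by blast
    then obtain e where e: "e \<in> T" "crosses d' e" using triangulations_maximal[OF T d'] by blast
    then have "crosses d ((rot n ^^ k) ` e)"
      using funpow_rot_crosses[OF n d', of e k] T_diags d_eq by auto
    then show ?thesis using e(1) unfolding rotation_def by blast
  qed
qed

lemma rotation_star:
  assumes n: "n \<ge> 3" and u: "u \<in> {1..n}" and k: "k \<le> n"
  shows "rotation n k (star n u) = star n ((rot n ^^ k) u)"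
proof
  show "rotation n k (star n u) \<subseteq> star n ((rot n ^^ k) u)"
    unfolding rotation_def star_def using funpow_rot_diags[OF n] by blast
  show "star n ((rot n ^^ k) u) \<subseteq> rotation n k (star n u)"
  proof
    fix D assume D: "D \<in> star n ((rot n ^^ k) u)"
    define d where "d = (rot n ^^ (n - k)) ` D"
    have "d \<in> diags n" unfolding d_def using funpow_rot_diags[OF n] D unfolding star_def by blast
    moreover have "u \<in> d"
      using funpow_rot_inverse[OF u, of "n - k" k] k D unfolding d_def star_def by force
    moreover have "(rot n ^^ k) ` d = D"
      using funpow_rot_image_inverse[of D n k "n - k"] diags_subset_vertices D k
      unfolding d_def star_def by auto
    ultimately show "D \<in> rotation n k (star n u)" unfolding rotation_def star_def by blast
  qed
qed

lemma kneser_adj_image: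
  assumes "inj_on f (X \<union> Y)" "kneser_adj X Y"
  shows "kneser_adj (f ` X) (f ` Y)"
proof -
  have "f ` X \<inter> f ` Y = f ` (X \<inter> Y)"
    by (rule inj_on_image_Int[OF assms(1), symmetric]) auto
  then have disj: "f ` X \<inter> f ` Y = {}" using assms(2) unfolding kneser_adj_def by simp
  moreover have "X \<noteq> {} \<or> Y \<noteq> {}" using assms(2) unfolding kneser_adj_def by blast
  ultimately show ?thesis unfolding kneser_adj_def by blast
qed

lemma colourable_minus_rotation:
  assumes n: "n \<ge> 3" and T: "T \<in> triangulations n" and k: "k \<le> n"
    and col: "colourable (triangulations n - {rotation n k T}) kneser_adj c"
  shows "colourable (triangulations n - {T}) kneser_adj c"
proof (rule colourable_hom[OF col])
  have inverse: "rotation n (n - k) (rotation n k S) = S" if "S \<in> triangulations n" for S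
    using rotation_inverse[OF triangulations_subset[OF that]] k by simp
  show "rotation n k ` (triangulations n - {T}) \<subseteq> triangulations n - {rotation n k T}"
    using rotation_triangulation[OF n _ k] inverse T
    by (auto dest: arg_cong[of _ _ "rotation n (n - k)"])
  show "kneser_adj (rotation n k S) (rotation n k S')"
    if "S \<in> triangulations n - {T}" "S' \<in> triangulations n - {T}" "kneser_adj S S'" for S S'
    unfolding rotation_def using that triangulations_subset
    by (intro kneser_adj_image inj_on_subset[OF inj_on_rotate_diags[OF k]]) auto
qed

lemma colourable_minus_rotation_iff:
  assumes n: "n \<ge> 3" and T: "T \<in> triangulations n" and k: "k \<le> n"
  shows "colourable (triangulations n - {rotation n k T}) kneser_adj c
    \<longleftrightarrow> colourable (triangulations n - {T}) kneser_adj c"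
proof
  assume "colourable (triangulations n - {T}) kneser_adj c"
  moreover have "rotation n (n - k) (rotation n k T) = T"
    using rotation_inverse[OF triangulations_subset[OF T]] k by simp
  ultimately show "colourable (triangulations n - {rotation n k T}) kneser_adj c"
    using colourable_minus_rotation[OF n rotation_triangulation[OF n T k], of "n - k"] by simp
qed (rule colourable_minus_rotation[OF n T k])

lemma colourable_minus_star:
  assumes n: "n \<ge> 3" and v: "v \<in> {1..n}"
  shows "colourable (triangulations n - {star n v}) kneser_adj (n - 3)"
proof -
  have "rotation n v (star n n) = star n v"
    using rotation_star[OF n, of n v] funpow_rot_from_last[OF v] v by auto
  then show ?thesis
    using colourable_minus_rotation_iff[OF n star_triangulation[OF n], of v]
      colourable_triangulations_minus_star[OF n] v by auto
qed

lemma not_colourable_minus_non_star: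
  assumes n: "n \<ge> 3" and T: "T \<in> triangulations n" and non_star: "\<not> is_star n T"
  shows "\<not> colourable (triangulations n - {T}) kneser_adj (n - 3)"
proof -
  have n5: "n \<ge> 5" using is_star_if_le_4[OF n _ T] non_star by linarith
  obtain v d e where de: "d \<in> T" "e \<in> T" "d \<noteq> e" "v \<in> d" "v \<in> e"
    using two_diagonals_at_a_vertex[OF n5 T] by blast
  have v: "v \<in> {1..n}" using triangulation_vertices[OF T de(1)] de(4) by blast
  let ?r = "\<lambda>d. (rot n ^^ (n - v)) ` d"
  define R where "R = rotation n (n - v) T"
  have R: "R \<in> triangulations n" unfolding R_def by (rule rotation_triangulation[OF n T]) simp
  have T_eq: "rotation n v R = T"
    unfolding R_def using rotation_inverse[OF triangulations_subset[OF T]] v by simp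
  have "R \<noteq> star n n"
  proof
    assume "R = star n n"
    then have "T = star n v"
      using T_eq rotation_star[OF n, of n v] funpow_rot_from_last[OF v] v by auto
    then show False using non_star v unfolding is_star_iff by blast
  qed
  moreover have "?r d \<in> R" "?r e \<in> R" unfolding R_def rotation_def using de by auto
  moreover have "n \<in> ?r d" "n \<in> ?r e" using funpow_rot_to_last[OF v] de by (metis imageI)+
  moreover have "?r d \<noteq> ?r e"
    using inj_on_rotate_diags[of "n - v" n] de triangulations_subset[OF T]
    by (auto dest: inj_onD)
  ultimately have "\<not> colourable (triangulations n - {R}) kneser_adj (n - 3)"
    using not_colourable_minus_two_diagonals_at_last[OF n5 R] by blast
  then show ?thesis using colourable_minus_rotation_iff[OF n R, of v] T_eq v by auto
qed

theorem theorem1p3: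
  fixes n :: nat and T :: "nat set set"
  assumes "n \<ge> 3" and "T \<in> triangulations n"
  shows "chromatic_number (triangulations n - {T}) kneser_adj = n - 2 \<longleftrightarrow> \<not> is_star n T"
proof (cases "is_star n T")
  case True
  then obtain v where "v \<in> {1..n}" "T = star n v" unfolding is_star_iff by blast
  then have "chromatic_number (triangulations n - {T}) kneser_adj \<le> n - 3"
    using colourable_minus_star[OF assms(1)] chromatic_number_le by blast
  then show ?thesis using True assms(1) by simp
next
  case False
  then have "n \<ge> 5" using is_star_if_le_4[OF assms(1) _ assms(2)] by linarith
  then have "Suc (n - 3) = n - 2" by simp
  then have "colourable (triangulations n - {T}) kneser_adj (Suc (n - 3))"
    using colourable_subset[OF colourable_triangulations Diff_subset] \<open>n \<ge> 5\<close> by simp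
  then have "chromatic_number (triangulations n - {T}) kneser_adj = Suc (n - 3)"
    using not_colourable_minus_non_star[OF assms False] by (rule chromatic_number_eq_Suc)
  then show ?thesis using False \<open>n \<ge> 5\<close> by simp
qed

end
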